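(* Let $k,d,b,\tilde b\ge0$ be measurable on $\mathbb{R}_+$ with $\int_0^{+\infty}k=\int_0^{+\infty}d=+\infty$ and $1<\int_0^{+\infty}\big(b(a)e^{-\int_0^ak}+\tilde b(a)e^{-\int_0^ad}\big)da<+\infty$. Let the competition functions be linear: $\eta(N_1,N_2)=\eta_1N_1+\eta_2N_2$, $c(N_1,N_2)=c_1N_1+c_2N_2$, $\tilde c(N_1,N_2)=\tilde c_1N_1+\tilde c_2N_2$ with nonnegative coefficients, and put $c_1^{tot}=\eta_1+c_1$, $c_2^{tot}=\eta_2+c_2$, $c_{tot}=c+\eta$. Assume $c_1^{tot}>0$, $\tilde c_2>0$ and $c_1^{tot}\ge c_2^{tot}$. Then every nonnegative solution $(N_1^*,N_2^* )$ of $$\int_0^{+\infty}\tilde b(a)e^{-\int_0^ad-\tilde c(N_1,N_2)a}da\cdot\int_0^{+\infty}\big(k(a)+\eta(N_1,N_2)\big)e^{-\int_0^ak-c_{tot}(N_1,N_2)a}da+\int_0^{+\infty}b(a)e^{-\int_0^ak-c_{tot}(N_1,N_2)a}da=1,$$ $$N_1\int_0^{+\infty}e^{-\int_0^ad-\tilde c(N_1,N_2)a}da\cdot\int_0^{+\infty}\big(k(a)+\eta(N_1,N_2)\big)e^{-\int_0^ak-c_{tot}(N_1,N_2)a}da-N_2\int_0^{+\infty}e^{-\int_0^ak-c_{tot}(N_1,N_2)a}da=0$$ satisfies $N_1^*+N_2^*\ge N^*$, where $N^*=\mu_0/c_1^{tot}$ if $\int_0^{+\infty}b(a)e^{-\int_0^ak}da>1$,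 with $\mu_0>0$ the unique solution of $\int_0^{+\infty}b(a)e^{-\int_0^ak(u)du-\mu_0a}da=1$, and $N^*=0$ otherwise.
   Context: $N^*$ is the total steady-state population of the one-phase model $\partial_tn+\partial_an=-(k(a)+c_{tot}(N(t),0))n$, $n(t,0)=\int bn$. *)

theory Defs
  imports "HOL-Analysis.Analysis"
begin

definition cum :: "(real \<Rightarrow> real) \<Rightarrow> real \<Rightarrow> ennreal" where
  "cum f a = (\<integral>\<^sup>+ u. ennreal (f u) * indicator {0..a} u \<partial>lborel)"

text \<open>\<open>exp(-\<int>_0^a f)\<close>, with the convention \<open>exp(-\<infinity>) = 0\<close>.\<close>
definition surv :: "(real \<Rightarrow> real) \<Rightarrow> real \<Rightarrow> real" where
  "surv f a = (if cum f a = \<infinity> then 0 else exp (- enn2real (cum f a)))"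

definition I0 :: "(real \<Rightarrow> real) \<Rightarrow> ennreal" where
  "I0 g = (\<integral>\<^sup>+ a. ennreal (g a) * indicator {0..} a \<partial>lborel)"

definition Nstar :: "(real \<Rightarrow> real) \<Rightarrow> (real \<Rightarrow> real) \<Rightarrow> real \<Rightarrow> real" where
  "Nstar k b c1tot =
     (if I0 (\<lambda>a. b a * surv k a) > 1
      then (THE \<mu>0. \<mu>0 > 0 \<and> I0 (\<lambda>a. b a * surv k a * exp (- \<mu>0 * a)) = 1) / c1tot
      else 0)"

end

theory Submission
  imports Defs
begin

text \<open>Since \<open>c\<^sub>2\<^sup>t\<^sup>o\<^sup>t \<le> c\<^sub>1\<^sup>t\<^sup>o\<^sup>t\<close>, the total competition rate \<open>\<mu> = c_tot(N\<^sub>1,N\<^sub>2)\<close> is at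
  most \<open>c\<^sub>1\<^sup>t\<^sup>o\<^sup>t (N\<^sub>1 + N\<^sub>2)\<close>, and the first steady-state equation alone gives
  \<open>\<int> b(a) e^{-\<int>\<^sub>0\<^sup>a k - \<mu> a} da \<le> 1\<close>. This transform of \<open>b e^{-\<int> k}\<close> is continuous in \<open>\<mu>\<close>
  and strictly decreasing while positive; it exceeds \<open>1\<close> at \<open>\<mu> = 0\<close> whenever \<open>N\<^sup>* > 0\<close>,
  so its unique root \<open>\<mu>\<^sub>0\<close> lies in \<open>(0, \<mu>]\<close> and \<open>N\<^sup>* = \<mu>\<^sub>0 / c\<^sub>1\<^sup>t\<^sup>o\<^sup>t \<le> N\<^sub>1 + N\<^sub>2\<close>.\<close>

lemma cum_mono: "x \<le> y \<Longrightarrow> cum f x \<le> cum f y"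
  unfolding cum_def by (intro nn_integral_mono) (auto simp: indicator_def)

lemma surv_nonneg: "0 \<le> surv f a"
  by (simp add: surv_def)

lemma surv_antimono:
  assumes "x \<le> y"
  shows "surv f y \<le> surv f x"
proof (cases "cum f y = \<infinity>")
  case True
  then show ?thesis by (simp add: surv_def)
next
  case False
  have "cum f x \<le> cum f y" using cum_mono[OF assms] .
  with False have "cum f x \<noteq> \<infinity>" and "enn2real (cum f x) \<le> enn2real (cum f y)"
    by (auto simp: enn2real_mono top.not_eq_extremum top_unique)
  with False show ?thesis by (simp add: surv_def)
qed

lemma borel_measurable_surv: "surv f \<in> borel_measurable borel"
proof -
  have "mono (\<lambda>x. - surv f x)"
    by (auto simp: mono_def intro: surv_antimono)
  then have "(\<lambda>x. - surv f x) \<in> borel_measurable borel"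
    by (rule borel_measurable_mono)
  then have "(\<lambda>x. - (- surv f x)) \<in> borel_measurable borel"
    by measurable
  then show ?thesis by simp
qed

lemma set_borel_measurable_mult_surv:
  assumes "set_borel_measurable lborel {0..} b"
  shows "set_borel_measurable lborel {0..} (\<lambda>a. b a * surv k a)"
proof -
  have "(\<lambda>a. (indicator {0..} a * b a) * surv k a) \<in> borel_measurable lborel"
  proof (rule borel_measurable_times[where f = "\<lambda>a. indicator {0..} a * b a"])
    show "(\<lambda>a. indicator {0..} a * b a) \<in> borel_measurable lborel"
      using assms by (simp add: set_borel_measurable_def)
  qed (simp add: borel_measurable_surv)
  then show ?thesis by (simp add: set_borel_measurable_def mult.assoc)
qed

lemma I0_mono:
  assumes "\<And>a. a \<ge> 0 \<Longrightarrow> f a \<le> g a"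
  shows "I0 f \<le> I0 g"
  unfolding I0_def using assms
  by (intro nn_integral_mono) (auto simp: indicator_def intro!: ennreal_leI)

locale finite_halfline_integral =
  fixes h :: "real \<Rightarrow> real"
  assumes measurable_h: "set_borel_measurable lborel {0..} h"
    and nonneg_h: "\<And>a. a \<ge> 0 \<Longrightarrow> h a \<ge> 0"
    and I0_finite: "I0 h < \<infinity>"
begin

definition damped :: "real \<Rightarrow> real \<Rightarrow> real" where
  "damped \<mu> a = indicator {0..} a * h a * exp (- \<mu> * a)"

text \<open>A real-valued (Bochner) counterpart of \<open>I0\<close>, so that continuity and the
  intermediate value theorem are available.\<close>
definition laplace :: "real \<Rightarrow> real" where
  "laplace \<mu> = (LINT a|lborel. damped \<mu> a)"

lemma borel_measurable_restricted_h:
  "(\<lambda>a. indicator {0..} a * h a) \<in> borel_measurable lborel"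
  using measurable_h by (simp add: set_borel_measurable_def)

lemma borel_measurable_damped: "damped \<mu> \<in> borel_measurable lborel"
proof -
  have "(\<lambda>a. (indicator {0..} a * h a) * exp (- \<mu> * a)) \<in> borel_measurable lborel"
    using borel_measurable_restricted_h by measurable
  then show ?thesis unfolding damped_def[abs_def] by simp
qed

lemma damped_nonneg: "0 \<le> damped \<mu> a"
  by (auto simp: damped_def indicator_def nonneg_h)

lemma damped_le: "\<mu> \<ge> 0 \<Longrightarrow> damped \<mu> a \<le> indicator {0..} a * h a"
  by (auto simp: damped_def indicator_def nonneg_h mult_left_le)

lemma integrable_h: "integrable lborel (\<lambda>a. indicator {0..} a * h a)"
proof (rule integrableI_bounded)
  show "(\<lambda>a. indicator {0..} a * h a) \<in> borel_measurable lborel"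
    by (rule borel_measurable_restricted_h)
  have "(\<integral>\<^sup>+ a. ennreal (norm (indicator {0..} a * h a)) \<partial>lborel) = I0 h"
    unfolding I0_def by (intro nn_integral_cong) (auto simp: indicator_def nonneg_h)
  then show "(\<integral>\<^sup>+ a. ennreal (norm (indicator {0..} a * h a)) \<partial>lborel) < \<infinity>"
    using I0_finite by simp
qed

lemma integrable_damped:
  assumes "\<mu> \<ge> 0"
  shows "integrable lborel (damped \<mu>)"
  using integrable_h borel_measurable_damped
proof (rule Bochner_Integration.integrable_bound)
  show "AE a in lborel. norm (damped \<mu> a) \<le> norm (indicator {0..} a * h a)"
    using assms damped_le damped_nonneg by (intro AE_I2) (simp add: order_trans[OF _ abs_ge_self])
qed

lemma I0_damped_eq_laplace:
  assumes "\<mu> \<ge> 0"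
  shows "I0 (\<lambda>a. h a * exp (- \<mu> * a)) = ennreal (laplace \<mu>)"
proof -
  have "I0 (\<lambda>a. h a * exp (- \<mu> * a)) = (\<integral>\<^sup>+ a. ennreal (damped \<mu> a) \<partial>lborel)"
    unfolding I0_def by (intro nn_integral_cong) (auto simp: damped_def indicator_def)
  also have "\<dots> = ennreal (laplace \<mu>)"
    unfolding laplace_def using integrable_damped[OF assms] damped_nonneg
    by (intro nn_integral_eq_integral) auto
  finally show ?thesis .
qed

lemma continuous_on_laplace: "continuous_on {0..} laplace"
proof -
  have "continuous (at x within {0..}) laplace" for x
  proof (rule continuous_within_sequentiallyI)
    fix u :: "nat \<Rightarrow> real"
    assume u: "u \<longlonglongrightarrow> x" "\<forall>n. u n \<in> {0..}"
    show "(\<lambda>n. laplace (u n)) \<longlonglongrightarrow> laplace x"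
      unfolding laplace_def
    proof (rule integral_dominated_convergence[where w = "\<lambda>a. indicator {0..} a * h a"])
      show "damped x \<in> borel_measurable lborel" "damped (u i) \<in> borel_measurable lborel" for i
        by (rule borel_measurable_damped)+
      show "AE a in lborel. (\<lambda>i. damped (u i) a) \<longlonglongrightarrow> damped x a"
        unfolding damped_def by (intro AE_I2 tendsto_intros u(1))
      show "AE a in lborel. norm (damped (u i) a) \<le> indicator {0..} a * h a" for i
        using u(2) damped_le damped_nonneg by (intro AE_I2) auto
    qed (rule integrable_h)
  qed
  then show ?thesis by (simp add: continuous_on_eq_continuous_within)
qed

lemma laplace_strict_decreasing:
  assumes "0 \<le> x" "x < y" "laplace y \<noteq> 0"
  shows "laplace y < laplace x"
proof (rule ccontr)
  assume "\<not> laplace y < laplace x"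
  have le: "damped y a \<le> damped x a" for a
    using assms by (auto simp: damped_def indicator_def nonneg_h intro!: mult_left_mono mult_right_mono)
  have ix: "integrable lborel (damped x)" and iy: "integrable lborel (damped y)"
    using integrable_damped assms by auto
  have "(LINT a|lborel. damped x a - damped y a) = laplace x - laplace y"
    unfolding laplace_def using ix iy by simp
  moreover have "(LINT a|lborel. damped x a - damped y a) \<ge> 0"
    using le by (intro integral_nonneg_AE) auto
  ultimately have "(LINT a|lborel. damped x a - damped y a) = 0"
    using \<open>\<not> laplace y < laplace x\<close> by linarith
  then have "AE a in lborel. damped x a - damped y a = 0"
    using ix iy le by (subst (asm) integral_nonneg_eq_0_iff_AE) auto
  then have "AE a in lborel. damped y a = 0"
    using AE_lborel_singleton[of 0]
  proof eventually_elim
    case (elim a)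
    show ?case
    proof (cases "a > 0")
      case True
      then have "exp (- y * a) < exp (- x * a)" using assms by simp
      moreover have "h a * exp (- x * a) = h a * exp (- y * a)"
        using elim True by (simp add: damped_def)
      ultimately have "h a = 0" by auto
      then show ?thesis by (simp add: damped_def)
    next
      case False
      with elim show ?thesis by (simp add: damped_def)
    qed
  qed
  then have "laplace y = 0" unfolding laplace_def by (rule integral_eq_zero_AE)
  with assms show False by simp
qed

lemma laplace_unique_root_le:
  assumes "laplace 0 > 1" "\<mu> \<ge> 0" "laplace \<mu> \<le> 1"
  obtains x where "0 < x" "x \<le> \<mu>" "laplace x = 1" "\<And>y. 0 < y \<Longrightarrow> laplace y = 1 \<Longrightarrow> y = x"
proof -
  have "continuous_on {0..\<mu>} laplace"
    using continuous_on_laplace by (rule continuous_on_subset) auto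
  with assms have "\<exists>x. 0 \<le> x \<and> x \<le> \<mu> \<and> laplace x = 1"
    by (intro IVT2') simp_all
  then obtain x where x: "0 \<le> x" "x \<le> \<mu>" "laplace x = 1"
    by blast
  with assms(1) have pos: "0 < x"
    by (cases "x = 0") simp_all
  have unique: "y = x" if y: "0 < y" "laplace y = 1" for y
  proof (rule ccontr)
    assume "y \<noteq> x"
    then consider "y < x" | "x < y" by linarith
    then show False
    proof cases
      case 1
      with y x show False using laplace_strict_decreasing[of y x] by simp
    next
      case 2
      with y x show False using laplace_strict_decreasing[of x y] by simp
    qed
  qed
  show ?thesis
    using pos x(2,3) unique by (rule that)
qed

end

lemma Nstar_le:
  assumes "set_borel_measurable lborel {0..} b" "\<And>a. a \<ge> 0 \<Longrightarrow> b a \<ge> 0"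
    and "I0 (\<lambda>a. b a * surv k a) < \<infinity>"
    and "c > 0" "\<mu> \<ge> 0" "I0 (\<lambda>a. b a * surv k a * exp (- \<mu> * a)) \<le> 1"
  shows "Nstar k b c \<le> \<mu> / c"
proof -
  interpret finite_halfline_integral "\<lambda>a. b a * surv k a"
    using assms(1-3) by unfold_locales
      (auto simp: set_borel_measurable_mult_surv surv_nonneg)
  show ?thesis
  proof (cases "I0 (\<lambda>a. b a * surv k a) > 1")
    case False
    with assms show ?thesis by (simp add: Nstar_def)
  next
    case True
    have "laplace 0 > 1"
      using True I0_damped_eq_laplace[of 0] by (simp add: ennreal_less_iff)
    moreover have "laplace \<mu> \<le> 1"
      using assms(5,6) I0_damped_eq_laplace[of \<mu>] by simp
    ultimately obtain x where x: "0 < x" "x \<le> \<mu>" "laplace x = 1"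
        and unique: "\<And>y. 0 < y \<Longrightarrow> laplace y = 1 \<Longrightarrow> y = x"
      using laplace_unique_root_le[OF _ assms(5)] by blast
    have "(THE \<mu>0. \<mu>0 > 0 \<and> I0 (\<lambda>a. b a * surv k a * exp (- \<mu>0 * a)) = 1) = x"
    proof (rule the_equality)
      show "x > 0 \<and> I0 (\<lambda>a. b a * surv k a * exp (- x * a)) = 1"
        using x I0_damped_eq_laplace[of x] by simp
    next
      fix y
      assume y: "y > 0 \<and> I0 (\<lambda>a. b a * surv k a * exp (- y * a)) = 1"
      then have "laplace y = 1"
        using I0_damped_eq_laplace[of y] by simp
      with y show "y = x"
        using unique[of y] by simp
    qed
    with True x assms(4) show ?thesis
      by (simp add: Nstar_def divide_right_mono)
  qed
qed

theorem corollary1: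
  fixes k d b bt :: "real \<Rightarrow> real"
    and \<eta>1 \<eta>2 c1 c2 ct1 ct2 N1 N2 :: real
  assumes meas: "set_borel_measurable lborel {0..} k" "set_borel_measurable lborel {0..} d"
      "set_borel_measurable lborel {0..} b" "set_borel_measurable lborel {0..} bt"
    and nonneg: "\<forall>a\<ge>0. k a \<ge> 0 \<and> d a \<ge> 0 \<and> b a \<ge> 0 \<and> bt a \<ge> 0"
    and k_inf: "I0 k = \<infinity>" and d_inf: "I0 d = \<infinity>"
    and R_gt: "1 < I0 (\<lambda>a. b a * surv k a + bt a * surv d a)"
    and R_fin: "I0 (\<lambda>a. b a * surv k a + bt a * surv d a) < \<infinity>"
    and coeffs: "\<eta>1 \<ge> 0" "\<eta>2 \<ge> 0" "c1 \<ge> 0" "c2 \<ge> 0" "ct1 \<ge> 0" "ct2 \<ge> 0"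
    and ctot1_pos: "\<eta>1 + c1 > 0"
    and ct2_pos: "ct2 > 0"
    and ctot_ge: "\<eta>1 + c1 \<ge> \<eta>2 + c2"
    and N_nonneg: "N1 \<ge> 0" "N2 \<ge> 0"
    and eq1: "I0 (\<lambda>a. bt a * surv d a * exp (- (ct1 * N1 + ct2 * N2) * a))
              * I0 (\<lambda>a. (k a + (\<eta>1 * N1 + \<eta>2 * N2)) * surv k a
                         * exp (- ((\<eta>1 + c1) * N1 + (\<eta>2 + c2) * N2) * a))
              + I0 (\<lambda>a. b a * surv k a * exp (- ((\<eta>1 + c1) * N1 + (\<eta>2 + c2) * N2) * a)) = 1"
    and eq2: "ennreal N1 * I0 (\<lambda>a. surv d a * exp (- (ct1 * N1 + ct2 * N2) * a))
              * I0 (\<lambda>a. (k a + (\<eta>1 * N1 + \<eta>2 * N2)) * surv k a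
                         * exp (- ((\<eta>1 + c1) * N1 + (\<eta>2 + c2) * N2) * a))
              = ennreal N2 * I0 (\<lambda>a. surv k a * exp (- ((\<eta>1 + c1) * N1 + (\<eta>2 + c2) * N2) * a))"
  shows "N1 + N2 \<ge> Nstar k b (\<eta>1 + c1)"
proof -
  define \<mu> where "\<mu> = (\<eta>1 + c1) * N1 + (\<eta>2 + c2) * N2"
  have "\<mu> \<ge> 0" unfolding \<mu>_def using coeffs N_nonneg by simp
  have "\<mu> \<le> (\<eta>1 + c1) * (N1 + N2)"
    unfolding \<mu>_def using ctot_ge N_nonneg by (simp add: distrib_left mult_right_mono)
  have "I0 (\<lambda>a. b a * surv k a) \<le> I0 (\<lambda>a. b a * surv k a + bt a * surv d a)"
    using nonneg surv_nonneg by (intro I0_mono) simp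
  then have finite: "I0 (\<lambda>a. b a * surv k a) < \<infinity>"
    using R_fin by (rule le_less_trans)
  obtain P where "P + I0 (\<lambda>a. b a * surv k a * exp (- \<mu> * a)) = 1"
    using eq1[folded \<mu>_def] by blast
  then have "I0 (\<lambda>a. b a * surv k a * exp (- \<mu> * a)) \<le> 1"
    by (metis add.commute le_iff_add)
  then have "Nstar k b (\<eta>1 + c1) \<le> \<mu> / (\<eta>1 + c1)"
    using nonneg by (intro Nstar_le[OF meas(3) _ finite ctot1_pos \<open>\<mu> \<ge> 0\<close>]) simp_all
  also have "\<dots> \<le> N1 + N2"
    using \<open>\<mu> \<le> (\<eta>1 + c1) * (N1 + N2)\<close> ctot1_pos by (simp add: divide_le_eq mult.commute)
  finally show ?thesis .
qed

end
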